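(* On a 2-step nilmanifold $X=\Gamma\backslash G$ with abelian invariant complex structure $J$, let $\mu\in\mathfrak g^{*(0,1)}\otimes\mathfrak g^{1,0}$. Then $\mu$ generates an abelian deformation (in the sense of the context) if and only if $\overline\partial\mu=0$ and $\mu$ satisfies Condition A.
   Context: $\mathfrak g$ is the Lie algebra of $G$, real 2-step nilpotent with center $\mathfrak c$; $J$ abelian ($J^2=-1$, $[JA,JB]=[A,B]$); $\Gamma$ discrete co-compact. $\mathfrak t$ is a $J$-invariant complement of $\mathfrak c$ with real basis $\{X_j,JX_j\}_{1\le j\le n}$; $\{Z_\alpha,JZ_\alpha\}_{n+1\le\alpha\le n+m}$ real basis of $\mathfrak c$; $T_j=\frac12(X_j-iJX_j)$, $W_\alpha=\frac12(Z_\alpha-iJZ_\alpha)$ basis of $\mathfrak g^{1,0}$; $[\overline T_k,T_j]=\sum_\alpha E^\alpha_{kj}W_\alpha+\sum_\alpha F^\alpha_{kj}\overline W_\alpha$, $F^\alpha_{kj}=-\overline{E^\alpha_{jk}}$. $\{\omega^p\}$ dual $(1,0)$-basis; $\mu=\sum\mu^i_j\overline\omega^j\otimes T_i+\sum\mu^i_\alpha\overline\omega^\alpha\otimes T_i+\sum\mu^\beta_j\overline\omega^j\otimes W_\beta+\sum\mu^\beta_\alpha\overline\omega^\alpha\otimes W_\beta$, elements of $\mathfrak g^{*(0,1)}\otimes\mathfrak g^{1,0}$ being regarded as linear maps $\mathfrak g^{0,1}\to\mathfrak g^{1,0}$. $\overline\partial$: $\overline\partial V=\sum_p\overline\omega^p\otimes[\overline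 e_p,V]^{1,0}$ for $V\in\mathfrak g^{1,0}$, $\overline\partial\overline\sigma=(d\overline\sigma)^{(0,2)}$, $\overline\partial(\overline\sigma\otimes V)=\overline\partial\overline\sigma\otimes V-\overline\sigma\wedge\overline\partial V$. Condition A: $\sum_i(\mu^i_jF^\alpha_{ki}-\mu^i_kF^\alpha_{ji})=0$ and $\sum_i\mu^i_\alpha F^\beta_{ji}=0$ for all $j,k,\alpha,\beta$. "$\mu$ generates an abelian deformation" means: there is a power series $\Phi(t)=\sum_{r\ge1}t^r\phi_r$ with $\phi_r\in\mathfrak g^{*(0,1)}\otimes\mathfrak g^{1,0}$, $\phi_1=\mu$, convergent for small real $t$, such that for all small $t$ the vectors $\overline S_j=\overline T_j+\Phi(t)\overline T_j$ and $\overline V_\alpha=\overline W_\alpha+\Phi(t)\overline W_\alpha$ satisfy $[\overline S_j,\overline S_k]=0$, $[\overline S_j,\overline V_\alpha]=0$, $[\overline V_\alpha,\overline V_\beta]=0$ (so they span the $(0,1)$-space of an abelian invariant complex structure). *)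

theory Defs
  imports Complex_Main
begin

text \<open>
  For 1 \<le> j \<le> n the (1,0)-basis vector e_j is T_j,
  for n+1 \<le> \<alpha> \<le> n+m it is W_\<alpha>.  An element of the complexification
  of g is a pair (h, a): h p is the coefficient of e_p (the (1,0)-part) and
  a p the coefficient of the conjugate vector (the (0,1)-part).
  J acts by i on the e_p and by -i on their conjugates.
\<close>

type_synonym gvec = "(nat \<Rightarrow> complex) \<times> (nat \<Rightarrow> complex)"

definition idx :: "nat \<Rightarrow> nat \<Rightarrow> nat set" where
  "idx n m = {1..n+m}"

definition tidx :: "nat \<Rightarrow> nat set" where
  "tidx n = {1..n}"

definition cidx :: "nat \<Rightarrow> nat \<Rightarrow> nat set" where
  "cidx n m = {n+1..n+m}"

definition Fc :: "(nat \<Rightarrow> nat \<Rightarrow> nat \<Rightarrow> complex) \<Rightarrow> nat \<Rightarrow> nat \<Rightarrow> nat \<Rightarrow> complex" where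
  "Fc E \<alpha> k j = - cnj (E \<alpha> j k)"

text \<open>The Lie bracket of the complexification of g:
  [conj T_k, T_j] = \<Sum>_\<alpha> E^\<alpha>_{kj} W_\<alpha> + \<Sum>_\<alpha> F^\<alpha>_{kj} conj W_\<alpha>,
  all other brackets of basis vectors being zero (g^{1,0} and g^{0,1} are abelian
  since J is abelian, and c is central), extended bilinearly.\<close>
definition brk :: "nat \<Rightarrow> nat \<Rightarrow> (nat \<Rightarrow> nat \<Rightarrow> nat \<Rightarrow> complex) \<Rightarrow> gvec \<Rightarrow> gvec \<Rightarrow> gvec" where
  "brk n m E X Y =
    ((\<lambda>\<alpha>. if \<alpha> \<in> cidx n m then
        (\<Sum>k\<in>tidx n. \<Sum>j\<in>tidx n. (snd X k * fst Y j - snd Y k * fst X j) * E \<alpha> k j) else 0),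
     (\<lambda>\<alpha>. if \<alpha> \<in> cidx n m then
        (\<Sum>k\<in>tidx n. \<Sum>j\<in>tidx n. (snd X k * fst Y j - snd Y k * fst X j) * Fc E \<alpha> k j) else 0))"

definition gzero :: gvec where "gzero = ((\<lambda>_. 0), (\<lambda>_. 0))"

definition real_elem :: "nat \<Rightarrow> nat \<Rightarrow> gvec \<Rightarrow> bool" where
  "real_elem n m X \<longleftrightarrow> (\<forall>p\<in>idx n m. snd X p = cnj (fst X p))"

text \<open>The center of g is exactly c: no nonzero element of the complexification
  of t is central (c is central by construction of the bracket).\<close>
definition center_is_c :: "nat \<Rightarrow> nat \<Rightarrow> (nat \<Rightarrow> nat \<Rightarrow> nat \<Rightarrow> complex) \<Rightarrow> bool" where
  "center_is_c n m E \<longleftrightarrow>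
     (\<forall>X. (\<forall>Y. brk n m E X Y = gzero) \<longrightarrow> (\<forall>j\<in>tidx n. fst X j = 0 \<and> snd X j = 0))"

text \<open>Existence of a lattice \<Gamma> (Malcev's criterion): g has a real basis
  v_0,...,v_{N-1}, N = dim_R g = 2(n+m), with rational structure constants.\<close>
definition admits_lattice :: "nat \<Rightarrow> nat \<Rightarrow> (nat \<Rightarrow> nat \<Rightarrow> nat \<Rightarrow> complex) \<Rightarrow> bool" where
  "admits_lattice n m E \<longleftrightarrow>
     (\<exists>v :: nat \<Rightarrow> gvec.
        (\<forall>r<2*(n+m). real_elem n m (v r)) \<and>
        (\<forall>c :: nat \<Rightarrow> real.
           (\<forall>p\<in>idx n m. (\<Sum>r<2*(n+m). of_real (c r) * fst (v r) p) = 0 \<and>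
                         (\<Sum>r<2*(n+m). of_real (c r) * snd (v r) p) = 0)
           \<longrightarrow> (\<forall>r<2*(n+m). c r = 0)) \<and>
        (\<forall>r<2*(n+m). \<forall>s<2*(n+m). \<exists>q :: nat \<Rightarrow> rat.
           \<forall>p\<in>idx n m.
             fst (brk n m E (v r) (v s)) p = (\<Sum>u<2*(n+m). of_rat (q u) * fst (v u) p) \<and>
             snd (brk n m E (v r) (v s)) p = (\<Sum>u<2*(n+m). of_rat (q u) * snd (v u) p)))"

text \<open>Standing assumptions: g real 2-step nilpotent (non-abelian, center = c),
  abelian J (built into the bracket), and G admits a co-compact lattice.\<close>
definition two_step_abelian_nilmanifold :: "nat \<Rightarrow> nat \<Rightarrow> (nat \<Rightarrow> nat \<Rightarrow> nat \<Rightarrow> complex) \<Rightarrow> bool" where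
  "two_step_abelian_nilmanifold n m E \<longleftrightarrow> 1 \<le> n \<and> center_is_c n m E \<and> admits_lattice n m E"

text \<open>An element \<mu> of g^{*(0,1)} \<otimes> g^{1,0} is given by its coefficient matrix:
  \<mu> p q is the coefficient of conj(\<omega>^q) \<otimes> e_p, so that \<mu>(conj e_q) = \<Sum>_p \<mu> p q e_p.\<close>

definition ebar :: "nat \<Rightarrow> gvec" where
  "ebar a = ((\<lambda>_. 0), (\<lambda>p. if p = a then 1 else 0))"

definition holo :: "nat \<Rightarrow> nat \<Rightarrow> (nat \<Rightarrow> complex) \<Rightarrow> gvec" where
  "holo n m h = ((\<lambda>p. if p \<in> idx n m then h p else 0), (\<lambda>_. 0))"

text \<open>dbar V for V in g^{1,0}, as a g^{1,0}-valued (0,1)-form evaluated on conj e_a: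
  (dbar V)(conj e_a) = [conj e_a, V]^{1,0}.\<close>
definition dbar_vec :: "nat \<Rightarrow> nat \<Rightarrow> (nat \<Rightarrow> nat \<Rightarrow> nat \<Rightarrow> complex) \<Rightarrow> (nat \<Rightarrow> complex) \<Rightarrow> nat \<Rightarrow> nat \<Rightarrow> complex" where
  "dbar_vec n m E h a = fst (brk n m E (ebar a) (holo n m h))"

text \<open>dbar conj(\<omega>^q) = (d conj(\<omega>^q))^{(0,2)}, with d\<sigma>(X,Y) = -\<sigma>([X,Y]) for
  invariant forms; evaluated on (conj e_a, conj e_b).\<close>
definition dbar_form :: "nat \<Rightarrow> nat \<Rightarrow> (nat \<Rightarrow> nat \<Rightarrow> nat \<Rightarrow> complex) \<Rightarrow> nat \<Rightarrow> nat \<Rightarrow> nat \<Rightarrow> complex" where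
  "dbar_form n m E q a b = - snd (brk n m E (ebar a) (ebar b)) q"

text \<open>dbar \<mu> evaluated on (conj e_a, conj e_b), its e_p-coefficient, using
  dbar(\<sigma> \<otimes> V) = dbar \<sigma> \<otimes> V - \<sigma> \<and> dbar V and
  (\<sigma> \<and> \<psi>)(X,Y) = \<sigma>(X)\<psi>(Y) - \<sigma>(Y)\<psi>(X).\<close>
definition dbar :: "nat \<Rightarrow> nat \<Rightarrow> (nat \<Rightarrow> nat \<Rightarrow> nat \<Rightarrow> complex) \<Rightarrow> (nat \<Rightarrow> nat \<Rightarrow> complex) \<Rightarrow> nat \<Rightarrow> nat \<Rightarrow> nat \<Rightarrow> complex" where
  "dbar n m E \<mu> a b p =
     (\<Sum>q\<in>idx n m.
        dbar_form n m E q a b * \<mu> p q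
        - ((if q = a then 1 else 0) * dbar_vec n m E (\<lambda>i. \<mu> i q) b p
           - (if q = b then 1 else 0) * dbar_vec n m E (\<lambda>i. \<mu> i q) a p))"

definition dbar_closed :: "nat \<Rightarrow> nat \<Rightarrow> (nat \<Rightarrow> nat \<Rightarrow> nat \<Rightarrow> complex) \<Rightarrow> (nat \<Rightarrow> nat \<Rightarrow> complex) \<Rightarrow> bool" where
  "dbar_closed n m E \<mu> \<longleftrightarrow> (\<forall>a\<in>idx n m. \<forall>b\<in>idx n m. \<forall>p\<in>idx n m. dbar n m E \<mu> a b p = 0)"

definition conditionA :: "nat \<Rightarrow> nat \<Rightarrow> (nat \<Rightarrow> nat \<Rightarrow> nat \<Rightarrow> complex) \<Rightarrow> (nat \<Rightarrow> nat \<Rightarrow> complex) \<Rightarrow> bool" where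
  "conditionA n m E \<mu> \<longleftrightarrow>
     (\<forall>j\<in>tidx n. \<forall>k\<in>tidx n. \<forall>\<alpha>\<in>cidx n m.
        (\<Sum>i\<in>tidx n. \<mu> i j * Fc E \<alpha> k i - \<mu> i k * Fc E \<alpha> j i) = 0) \<and>
     (\<forall>j\<in>tidx n. \<forall>\<alpha>\<in>cidx n m. \<forall>\<beta>\<in>cidx n m.
        (\<Sum>i\<in>tidx n. \<mu> i \<alpha> * Fc E \<beta> j i) = 0)"

definition Phi :: "(nat \<Rightarrow> nat \<Rightarrow> nat \<Rightarrow> complex) \<Rightarrow> real \<Rightarrow> nat \<Rightarrow> nat \<Rightarrow> complex" where
  "Phi \<phi> t p q = (\<Sum>r. of_real t ^ Suc r * \<phi> (Suc r) p q)"

text \<open>The deformed (0,1)-vectors conj e_q + \<Phi>(t)(conj e_q).\<close>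
definition defo_vec :: "nat \<Rightarrow> nat \<Rightarrow> (nat \<Rightarrow> nat \<Rightarrow> nat \<Rightarrow> complex) \<Rightarrow> real \<Rightarrow> nat \<Rightarrow> gvec" where
  "defo_vec n m \<phi> t q =
     ((\<lambda>p. if p \<in> idx n m then Phi \<phi> t p q else 0), (\<lambda>p. if p = q then 1 else 0))"

definition generates_abelian_deformation ::
  "nat \<Rightarrow> nat \<Rightarrow> (nat \<Rightarrow> nat \<Rightarrow> nat \<Rightarrow> complex) \<Rightarrow> (nat \<Rightarrow> nat \<Rightarrow> complex) \<Rightarrow> bool" where
  "generates_abelian_deformation n m E \<mu> \<longleftrightarrow>
     (\<exists>\<phi> :: nat \<Rightarrow> nat \<Rightarrow> nat \<Rightarrow> complex.
        (\<forall>p\<in>idx n m. \<forall>q\<in>idx n m. \<phi> 1 p q = \<mu> p q) \<and>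
        (\<exists>\<epsilon>>0. \<forall>t::real. \<bar>t\<bar> < \<epsilon> \<longrightarrow>
           (\<forall>p\<in>idx n m. \<forall>q\<in>idx n m. summable (\<lambda>r. of_real t ^ Suc r * \<phi> (Suc r) p q)) \<and>
           (\<forall>q\<in>idx n m. \<forall>q'\<in>idx n m.
              brk n m E (defo_vec n m \<phi> t q) (defo_vec n m \<phi> t q') = gzero)))"

end

theory Submission
  imports Defs
begin

text \<open>
  Since \<open>J\<close> is abelian, \<open>g\<^sup>0\<^sup>,\<^sup>1\<close> and \<open>g\<^sup>1\<^sup>,\<^sup>0\<close> are abelian, so the bracket of two
  deformed vectors \<open>conj e\<^sub>q + \<Phi>(conj e\<^sub>q)\<close> reduces to
  \<open>[conj e\<^sub>q, \<Phi>(conj e\<^sub>q')] - [conj e\<^sub>q', \<Phi>(conj e\<^sub>q)]\<close>, which is linear in \<open>\<Phi>\<close>.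
  For \<open>\<Phi> = \<mu>\<close> its \<open>W\<close>-components are, up to sign, the components of \<open>dbar \<mu>\<close>, and its
  \<open>conj W\<close>-components are the expressions of Condition A. If \<open>\<Phi>(t) = \<Sigma> t\<^sup>r \<phi>\<^sub>r\<close> gives
  an abelian structure for all small \<open>t\<close>, the power series \<open>\<Sigma> t\<^sup>r L(\<phi>\<^sub>r)\<close> of these
  linear expressions vanishes identically, so its lowest coefficient \<open>L(\<mu>)\<close> does;
  conversely \<open>\<Phi>(t) = t\<mu>\<close> works.
\<close>

lemma powser_coeff_0_eq_0:
  fixes a :: "nat \<Rightarrow> 'a::{real_normed_field,banach}"
  assumes "0 < s" and "\<And>x. x \<noteq> 0 \<Longrightarrow> norm x < s \<Longrightarrow> (\<lambda>n. a n * x ^ n) sums 0"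
  shows "a 0 = 0"
  using powser_limit_0_strong[OF assms] LIM_const_eq by metis

lemma powser_of_real_coeff_0_eq_0:
  fixes c :: "nat \<Rightarrow> complex"
  assumes "0 < s" and vanish: "\<And>t::real. \<bar>t\<bar> < s \<Longrightarrow> (\<lambda>n. of_real t ^ Suc n * c n) sums 0"
  shows "c 0 = 0"
proof -
  have "(\<lambda>n. c n * of_real t ^ n) sums 0" if "t \<noteq> 0" "\<bar>t\<bar> < s" for t :: real
    using sums_mult[OF vanish[OF that(2)], of "inverse (of_real t)"] that(1)
    by (simp add: field_simps)
  then have Re_sums: "(\<lambda>n. Re (c n) * t ^ n) sums 0"
    and Im_sums: "(\<lambda>n. Im (c n) * t ^ n) sums 0" if "t \<noteq> 0" "\<bar>t\<bar> < s" for t :: real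
    using that sums_Re sums_Im by (fastforce simp flip: of_real_power)+
  have "Re (c 0) = 0"
    by (rule powser_coeff_0_eq_0[OF \<open>0 < s\<close>]) (simp add: Re_sums)
  moreover have "Im (c 0) = 0"
    by (rule powser_coeff_0_eq_0[OF \<open>0 < s\<close>]) (simp add: Im_sums)
  ultimately show ?thesis by (simp add: complex_eq_iff)
qed

lemma sum_sum_delta:
  assumes "finite A"
  shows "(\<Sum>k\<in>A. \<Sum>j\<in>B. if k = c then f k j else 0) = (if c \<in> A then \<Sum>j\<in>B. f c j else 0)"
proof -
  have "(\<Sum>k\<in>A. \<Sum>j\<in>B. if k = c then f k j else 0) = (\<Sum>k\<in>A. if k = c then \<Sum>j\<in>B. f k j else 0)"
    by (rule sum.cong) auto
  with assms show ?thesis by simp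
qed

lemma finite_tidx [simp]: "finite (tidx n)"
  by (simp add: tidx_def)

lemma idx_eq_tidx_Un_cidx: "idx n m = tidx n \<union> cidx n m"
  by (auto simp: idx_def tidx_def cidx_def)

lemma cidx_not_tidx: "p \<in> cidx n m \<Longrightarrow> p \<notin> tidx n"
  by (auto simp: tidx_def cidx_def)

text \<open>\<^term>\<open>mixed_bracket n E P q q' \<alpha>\<close> and \<^term>\<open>mixed_bracket n (Fc E) P q q' \<alpha>\<close>
  are the coefficients of \<open>W\<^sub>\<alpha>\<close> and of \<open>conj W\<^sub>\<alpha>\<close> in
  \<open>[conj e\<^sub>q, P(conj e\<^sub>q')] - [conj e\<^sub>q', P(conj e\<^sub>q)]\<close>.\<close>

definition mixed_bracket ::
  "nat \<Rightarrow> (nat \<Rightarrow> nat \<Rightarrow> nat \<Rightarrow> complex) \<Rightarrow> (nat \<Rightarrow> nat \<Rightarrow> complex) \<Rightarrow> nat \<Rightarrow> nat \<Rightarrow> nat \<Rightarrow> complex"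
  where
  "mixed_bracket n K P q q' \<alpha> =
     (if q \<in> tidx n then \<Sum>j\<in>tidx n. K \<alpha> q j * P j q' else 0)
     - (if q' \<in> tidx n then \<Sum>j\<in>tidx n. K \<alpha> q' j * P j q else 0)"

lemma mixed_bracket_sums:
  assumes "\<And>j. j \<in> tidx n \<Longrightarrow> (\<lambda>r. f r j q) sums P j q"
    and "\<And>j. j \<in> tidx n \<Longrightarrow> (\<lambda>r. f r j q') sums P j q'"
  shows "(\<lambda>r. mixed_bracket n K (f r) q q' \<alpha>) sums mixed_bracket n K P q q' \<alpha>"
  unfolding mixed_bracket_def
  by (intro sums_diff) (auto intro!: sums_sum sums_mult assms)

lemma mixed_bracket_scale: "mixed_bracket n K (\<lambda>j q. c * P j q) q q' \<alpha> = c * mixed_bracket n K P q q' \<alpha>"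
  by (simp add: mixed_bracket_def sum_distrib_left algebra_simps)

lemma mixed_bracket_cong:
  assumes "\<And>j. j \<in> tidx n \<Longrightarrow> P j q = Q j q" "\<And>j. j \<in> tidx n \<Longrightarrow> P j q' = Q j q'"
  shows "mixed_bracket n K P q q' \<alpha> = mixed_bracket n K Q q q' \<alpha>"
  using assms by (simp add: mixed_bracket_def)

lemma brk_defo_vec:
  "brk n m E (defo_vec n m \<phi> t q) (defo_vec n m \<phi> t q') =
    ((\<lambda>\<alpha>. if \<alpha> \<in> cidx n m then mixed_bracket n E (Phi \<phi> t) q q' \<alpha> else 0),
     (\<lambda>\<alpha>. if \<alpha> \<in> cidx n m then mixed_bracket n (Fc E) (Phi \<phi> t) q q' \<alpha> else 0))"
proof -
  have "(\<Sum>k\<in>tidx n. \<Sum>j\<in>tidx n.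
          ((if k = q then 1 else 0) * (if j \<in> idx n m then P j q' else 0)
           - (if k = q' then 1 else 0) * (if j \<in> idx n m then P j q else 0)) * K k j)
        = (\<Sum>k\<in>tidx n. \<Sum>j\<in>tidx n. if k = q then K k j * P j q' else 0)
          - (\<Sum>k\<in>tidx n. \<Sum>j\<in>tidx n. if k = q' then K k j * P j q else 0)"
    for P :: "nat \<Rightarrow> nat \<Rightarrow> complex" and K :: "nat \<Rightarrow> nat \<Rightarrow> complex"
    unfolding sum_subtractf[symmetric] idx_eq_tidx_Un_cidx
    by (intro sum.cong refl) (auto simp: algebra_simps)
  then show ?thesis
    by (simp add: brk_def defo_vec_def mixed_bracket_def sum_sum_delta fun_eq_iff)
qed

lemma brk_defo_vec_eq_gzero_iff:
  "brk n m E (defo_vec n m \<phi> t q) (defo_vec n m \<phi> t q') = gzero \<longleftrightarrow>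
    (\<forall>\<alpha>\<in>cidx n m. mixed_bracket n E (Phi \<phi> t) q q' \<alpha> = 0
                 \<and> mixed_bracket n (Fc E) (Phi \<phi> t) q q' \<alpha> = 0)"
  by (auto simp: brk_defo_vec gzero_def fun_eq_iff)

lemma dbar_eq_mixed_bracket:
  assumes "a \<in> idx n m" "b \<in> idx n m"
  shows "dbar n m E \<mu> a b p = - (if p \<in> cidx n m then mixed_bracket n E \<mu> b a p else 0)"
proof -
  have dbar_form_zero: "dbar_form n m E q a b = 0" for q
    by (simp add: dbar_form_def brk_def ebar_def)
  have dbar_vec_eq: "dbar_vec n m E h c p =
      (if p \<in> cidx n m \<and> c \<in> tidx n then \<Sum>j\<in>tidx n. E p c j * h j else 0)" for h c
  proof -
    have "(\<Sum>k\<in>tidx n. \<Sum>j\<in>tidx n. (if k = c then 1 else 0) * (if j \<in> idx n m then h j else 0) * E p k j)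
        = (\<Sum>k\<in>tidx n. \<Sum>j\<in>tidx n. if k = c then E p k j * h j else 0)"
      unfolding idx_eq_tidx_Un_cidx by (intro sum.cong refl) auto
    then show ?thesis
      by (simp add: dbar_vec_def brk_def ebar_def holo_def sum_sum_delta)
  qed
  have "dbar n m E \<mu> a b p = (\<Sum>q\<in>idx n m.
      (if q = b then dbar_vec n m E (\<lambda>i. \<mu> i q) a p else 0)
      - (if q = a then dbar_vec n m E (\<lambda>i. \<mu> i q) b p else 0))"
    unfolding dbar_def dbar_form_zero by (intro sum.cong refl) auto
  also have "\<dots> = dbar_vec n m E (\<lambda>i. \<mu> i b) a p - dbar_vec n m E (\<lambda>i. \<mu> i a) b p"
    using assms by (simp add: sum_subtractf idx_def)
  also have "\<dots> = - (if p \<in> cidx n m then mixed_bracket n E \<mu> b a p else 0)"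
    by (simp add: dbar_vec_eq mixed_bracket_def mult.commute)
  finally show ?thesis .
qed

lemma dbar_closed_iff_mixed_bracket:
  "dbar_closed n m E \<mu> \<longleftrightarrow>
    (\<forall>q\<in>idx n m. \<forall>q'\<in>idx n m. \<forall>\<alpha>\<in>cidx n m. mixed_bracket n E \<mu> q q' \<alpha> = 0)"
proof -
  have "dbar_closed n m E \<mu> \<longleftrightarrow> (\<forall>a\<in>idx n m. \<forall>b\<in>idx n m. \<forall>p\<in>idx n m.
          p \<in> cidx n m \<longrightarrow> mixed_bracket n E \<mu> b a p = 0)"
    by (simp add: dbar_closed_def dbar_eq_mixed_bracket)
  then show ?thesis
    by (auto simp: idx_eq_tidx_Un_cidx)
qed

lemma conditionA_iff_mixed_bracket:
  "conditionA n m E \<mu> \<longleftrightarrow>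
    (\<forall>q\<in>idx n m. \<forall>q'\<in>idx n m. \<forall>\<alpha>\<in>cidx n m. mixed_bracket n (Fc E) \<mu> q q' \<alpha> = 0)"
proof -
  have "conditionA n m E \<mu> \<longleftrightarrow>
      (\<forall>j\<in>tidx n. \<forall>k\<in>tidx n. \<forall>\<alpha>\<in>cidx n m. mixed_bracket n (Fc E) \<mu> k j \<alpha> = 0) \<and>
      (\<forall>j\<in>tidx n. \<forall>\<alpha>\<in>cidx n m. \<forall>\<beta>\<in>cidx n m. mixed_bracket n (Fc E) \<mu> j \<alpha> \<beta> = 0)"
    using cidx_not_tidx
    by (auto simp: conditionA_def mixed_bracket_def sum_subtractf mult.commute)
  also have "\<dots> \<longleftrightarrow>
      (\<forall>q\<in>idx n m. \<forall>q'\<in>idx n m. \<forall>\<alpha>\<in>cidx n m. mixed_bracket n (Fc E) \<mu> q q' \<alpha> = 0)"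
    using cidx_not_tidx
    by (auto simp: idx_eq_tidx_Un_cidx mixed_bracket_def)
  finally show ?thesis .
qed

lemma generates_abelian_deformationD:
  assumes "generates_abelian_deformation n m E \<mu>" and "K = E \<or> K = Fc E"
    and q: "q \<in> idx n m" and q': "q' \<in> idx n m" and "\<alpha> \<in> cidx n m"
  shows "mixed_bracket n K \<mu> q q' \<alpha> = 0"
proof -
  obtain \<phi> e where \<phi>1: "\<forall>p\<in>idx n m. \<forall>q\<in>idx n m. \<phi> 1 p q = \<mu> p q" and "e > 0"
    and deform: "\<And>t. \<bar>t\<bar> < e \<Longrightarrow>
           (\<forall>p\<in>idx n m. \<forall>q\<in>idx n m. summable (\<lambda>r. of_real t ^ Suc r * \<phi> (Suc r) p q)) \<and>
           (\<forall>q\<in>idx n m. \<forall>q'\<in>idx n m.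
              brk n m E (defo_vec n m \<phi> t q) (defo_vec n m \<phi> t q') = gzero)"
    using assms(1) unfolding generates_abelian_deformation_def by blast
  have "mixed_bracket n K (\<phi> (Suc 0)) q q' \<alpha> = 0"
  proof (rule powser_of_real_coeff_0_eq_0[OF \<open>e > 0\<close>])
    fix t :: real
    assume t: "\<bar>t\<bar> < e"
    have "(\<lambda>r. mixed_bracket n K (\<lambda>j q. of_real t ^ Suc r * \<phi> (Suc r) j q) q q' \<alpha>)
            sums mixed_bracket n K (Phi \<phi> t) q q' \<alpha>"
      using deform[OF t] q q'
      by (intro mixed_bracket_sums) (auto simp: Phi_def idx_eq_tidx_Un_cidx)
    moreover have "mixed_bracket n K (Phi \<phi> t) q q' \<alpha> = 0"
      using deform[OF t] q q' assms(2,5) by (auto simp: brk_defo_vec_eq_gzero_iff)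
    ultimately show "(\<lambda>r. of_real t ^ Suc r * mixed_bracket n K (\<phi> (Suc r)) q q' \<alpha>) sums 0"
      by (simp add: mixed_bracket_scale)
  qed
  moreover have "mixed_bracket n K (\<phi> (Suc 0)) q q' \<alpha> = mixed_bracket n K \<mu> q q' \<alpha>"
    using \<phi>1 q q' by (intro mixed_bracket_cong) (auto simp: idx_eq_tidx_Un_cidx)
  ultimately show ?thesis by simp
qed

lemma generates_abelian_deformationI:
  assumes "\<forall>q\<in>idx n m. \<forall>q'\<in>idx n m. \<forall>\<alpha>\<in>cidx n m.
             mixed_bracket n E \<mu> q q' \<alpha> = 0 \<and> mixed_bracket n (Fc E) \<mu> q q' \<alpha> = 0"
  shows "generates_abelian_deformation n m E \<mu>"
proof -
  define \<phi> :: "nat \<Rightarrow> nat \<Rightarrow> nat \<Rightarrow> complex" where "\<phi> r = (if r = 1 then \<mu> else (\<lambda>_ _. 0))" for r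
  have series: "(\<lambda>r. of_real t ^ Suc r * \<phi> (Suc r) p q) = (\<lambda>r. if r = 0 then of_real t * \<mu> p q else 0)"
    for t p q
    by (auto simp: \<phi>_def)
  then have summable: "summable (\<lambda>r. of_real t ^ Suc r * \<phi> (Suc r) p q)" for t p q
    by simp
  have Phi_eq: "Phi \<phi> t = (\<lambda>p q. of_real t * \<mu> p q)" for t
  proof (intro ext)
    show "Phi \<phi> t p q = of_real t * \<mu> p q" for p q
      using sums_single[of 0 "\<lambda>_. of_real t * \<mu> p q"] unfolding Phi_def series by (simp add: sums_iff)
  qed
  have abelian: "brk n m E (defo_vec n m \<phi> t q) (defo_vec n m \<phi> t q') = gzero"
    if "q \<in> idx n m" "q' \<in> idx n m" for t q q'
    using assms that by (simp add: brk_defo_vec_eq_gzero_iff Phi_eq mixed_bracket_scale)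
  show ?thesis
    unfolding generates_abelian_deformation_def
    by (intro exI[of _ \<phi>] conjI exI[of _ 1]) (simp add: \<phi>_def, simp, blast intro: summable abelian)
qed

theorem theorem5p3:
  fixes n m :: nat
    and E :: "nat \<Rightarrow> nat \<Rightarrow> nat \<Rightarrow> complex"
    and \<mu> :: "nat \<Rightarrow> nat \<Rightarrow> complex"
  assumes "two_step_abelian_nilmanifold n m E"
  shows "generates_abelian_deformation n m E \<mu> \<longleftrightarrow>
           dbar_closed n m E \<mu> \<and> conditionA n m E \<mu>"
  using generates_abelian_deformationD[of n m E \<mu>] generates_abelian_deformationI[of n m E \<mu>]
  unfolding dbar_closed_iff_mixed_bracket conditionA_iff_mixed_bracket by blast

end
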